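(* Let $M_1$ and $M_2$ be matroids on a common ground set $E$ with the same rank $r$, and assume $r_{M_1}(X)+r_{M_2}(E\setminus X)>r$ for every $\emptyset\ne X\subsetneq E$. Let $B$ be a common basis of $M_1,M_2$ and $\psi\colon E\to\Gamma$ a labeling to an abelian group $\Gamma$. Then every directed cycle $C$ of $D_{M_1,M_2}(B)$ satisfies $\psi'(C)=0$ if and only if there exist labelings $\psi_1,\psi_2\colon E\to\Gamma$ with $\psi=\psi_1+\psi_2$ such that, for $i=1,2$, $\psi_i$ is constant on each connected component of $M_i$.
   Context: $r_M$ denotes the rank function. For a common basis $B$, the digraph $D_{M_1,M_2}(B)$ has vertex set $E$ and arcs: for each $x\in B$, $y\in E\setminus B$ with $B-x+y$ a basis of $M_1$, an arc $xy$ with label $\psi'(xy):=\psi(y)$; for each $x\in B$, $y\in E\setminus B$ with $B-x+y$ a basis of $M_2$, an arc $yx$ with label $\psi'(yx):=-\psi(x)$. The label of a directed cycle is the sum of the labels of its arcs. Connected components of a matroid are the classes of the relation "equal or in a common circuit". *)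

theory Defs
  imports Main
begin

definition matroid :: "'a set \<Rightarrow> ('a set \<Rightarrow> bool) \<Rightarrow> bool" where
  "matroid E indep \<longleftrightarrow> finite E \<and> indep {} \<and>
     (\<forall>X. indep X \<longrightarrow> X \<subseteq> E) \<and>
     (\<forall>X Y. indep X \<and> Y \<subseteq> X \<longrightarrow> indep Y) \<and>
     (\<forall>X Y. indep X \<and> indep Y \<and> card X < card Y \<longrightarrow>
        (\<exists>y\<in>Y - X. indep (insert y X)))"

definition mrank :: "('a set \<Rightarrow> bool) \<Rightarrow> 'a set \<Rightarrow> nat" where
  "mrank indep X = Max {card Y | Y. Y \<subseteq> X \<and> indep Y}"

definition mbasis :: "'a set \<Rightarrow> ('a set \<Rightarrow> bool) \<Rightarrow> 'a set \<Rightarrow> bool" where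
  "mbasis E indep B \<longleftrightarrow> B \<subseteq> E \<and> indep B \<and> (\<forall>x\<in>E - B. \<not> indep (insert x B))"

definition mcircuit :: "'a set \<Rightarrow> ('a set \<Rightarrow> bool) \<Rightarrow> 'a set \<Rightarrow> bool" where
  "mcircuit E indep C \<longleftrightarrow> C \<subseteq> E \<and> \<not> indep C \<and> (\<forall>x\<in>C. indep (C - {x}))"

definition comp_rel :: "'a set \<Rightarrow> ('a set \<Rightarrow> bool) \<Rightarrow> 'a \<Rightarrow> 'a \<Rightarrow> bool" where
  "comp_rel E indep x y \<longleftrightarrow> x = y \<or> (\<exists>C. mcircuit E indep C \<and> x \<in> C \<and> y \<in> C)"

definition mcomponents :: "'a set \<Rightarrow> ('a set \<Rightarrow> bool) \<Rightarrow> 'a set set" where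
  "mcomponents E indep = {{y \<in> E. comp_rel E indep x y} | x. x \<in> E}"

definition exch_arcs :: "'a set \<Rightarrow> ('a set \<Rightarrow> bool) \<Rightarrow> ('a set \<Rightarrow> bool) \<Rightarrow> 'a set \<Rightarrow> ('a \<times> 'a) set" where
  "exch_arcs E I1 I2 B =
     {(x, y) | x y. x \<in> B \<and> y \<in> E - B \<and> mbasis E I1 (insert y (B - {x}))} \<union>
     {(y, x) | x y. x \<in> B \<and> y \<in> E - B \<and> mbasis E I2 (insert y (B - {x}))}"

text \<open>Label psi' of an arc: arcs leaving B (from M1) get psi of the head,
  arcs entering B (from M2) get minus psi of the head.\<close>
definition arc_label :: "'a set \<Rightarrow> ('a \<Rightarrow> 'g::ab_group_add) \<Rightarrow> 'a \<times> 'a \<Rightarrow> 'g" where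
  "arc_label B \<psi> a = (if fst a \<in> B then \<psi> (snd a) else - \<psi> (snd a))"

definition dir_cycle :: "('a \<times> 'a) set \<Rightarrow> 'a list \<Rightarrow> bool" where
  "dir_cycle A vs \<longleftrightarrow> vs \<noteq> [] \<and> distinct vs \<and>
     (\<forall>i < length vs. (vs ! i, vs ! ((i + 1) mod length vs)) \<in> A)"

definition cycle_label :: "'a set \<Rightarrow> ('a \<Rightarrow> 'g::ab_group_add) \<Rightarrow> 'a list \<Rightarrow> 'g" where
  "cycle_label B \<psi> vs =
     (\<Sum>i < length vs. arc_label B \<psi> (vs ! i, vs ! ((i + 1) mod length vs)))"

end

theory Submission
  imports Defs
begin

text \<open>
  The exchange digraph is strongly connected: the set \<open>S\<close> of vertices reachable from a vertex
  has no leaving arc, which forces \<open>r\<^sub>1(E - S) \<le> |B - S|\<close> and \<open>r\<^sub>2(S) \<le> |B \<inter> S|\<close>, and the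
  connectivity hypothesis then leaves no room for \<open>E - S\<close>. Hence all cycle labels vanish iff the
  arc labels are differences \<open>p v - p u\<close> of a potential \<open>p\<close>. Putting \<open>\<psi>\<^sub>2 = p + \<psi>\<close> on \<open>B\<close>,
  \<open>\<psi>\<^sub>2 = p\<close> off \<open>B\<close> and \<open>\<psi>\<^sub>1 = \<psi> - \<psi>\<^sub>2\<close> translates this into: \<open>\<psi>\<^sub>i\<close> is invariant under
  the basis exchanges of \<open>B\<close> in \<open>M\<^sub>i\<close>. Finally, a function is invariant under the exchanges
  of a basis iff it is constant on the components: each exchange pair lies in a fundamental
  circuit, and conversely every level set of an exchange-invariant function is a separator of
  the matroid, so it cannot cut a circuit.
\<close>

definition basis_exchange :: "'a set \<Rightarrow> ('a set \<Rightarrow> bool) \<Rightarrow> 'a set \<Rightarrow> 'a \<Rightarrow> 'a \<Rightarrow> bool" where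
  "basis_exchange E indep B x y \<longleftrightarrow> x \<in> B \<and> y \<in> E - B \<and> mbasis E indep (insert y (B - {x}))"

locale matroid_on =
  fixes E :: "'a set" and indep :: "'a set \<Rightarrow> bool"
  assumes matroid: "matroid E indep"
begin

abbreviation basis :: "'a set \<Rightarrow> bool" where "basis \<equiv> mbasis E indep"
abbreviation circuit :: "'a set \<Rightarrow> bool" where "circuit \<equiv> mcircuit E indep"
abbreviation exchange :: "'a set \<Rightarrow> 'a \<Rightarrow> 'a \<Rightarrow> bool" where "exchange \<equiv> basis_exchange E indep"

lemma finite_E: "finite E"
  using matroid by (simp add: matroid_def)

lemma indep_empty: "indep {}"
  using matroid by (simp add: matroid_def)

lemma indep_subset_E: "indep X \<Longrightarrow> X \<subseteq> E"
  using matroid by (simp add: matroid_def)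

lemma indep_subset: "indep X \<Longrightarrow> Y \<subseteq> X \<Longrightarrow> indep Y"
  using matroid unfolding matroid_def by blast

lemma indep_augment: "indep X \<Longrightarrow> indep Y \<Longrightarrow> card X < card Y \<Longrightarrow> \<exists>y\<in>Y - X. indep (insert y X)"
  using matroid unfolding matroid_def by blast

lemma indep_finite: "indep X \<Longrightarrow> finite X"
  using finite_subset[OF indep_subset_E finite_E] .

lemma indep_extend:
  "indep X \<Longrightarrow> indep Y \<Longrightarrow> card X \<le> card Y \<Longrightarrow>
    \<exists>Z. X \<subseteq> Z \<and> Z \<subseteq> X \<union> Y \<and> indep Z \<and> card Z = card Y"
proof (induction "card Y - card X" arbitrary: X)
  case 0
  then show ?case by auto
next
  case (Suc n)
  then obtain y where y: "y \<in> Y - X" "indep (insert y X)"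
    using indep_augment by (metis zero_less_Suc zero_less_diff)
  have "card (insert y X) = Suc (card X)"
    using y indep_finite[OF \<open>indep X\<close>] by simp
  then have "n = card Y - card (insert y X)" "card (insert y X) \<le> card Y"
    using Suc.hyps(2) by simp_all
  with Suc.hyps(1) y(2) \<open>indep Y\<close> obtain Z
    where "insert y X \<subseteq> Z" "Z \<subseteq> insert y X \<union> Y" "indep Z" "card Z = card Y"
    by blast
  with y show ?case by blast
qed

lemma indep_card_le_maximal:
  assumes "indep D" "D \<subseteq> T" "\<forall>y\<in>T - D. \<not> indep (insert y D)" "indep Z" "Z \<subseteq> T"
  shows "card Z \<le> card D"
proof (rule ccontr)
  assume "\<not> card Z \<le> card D"
  then obtain y where "y \<in> Z - D" "indep (insert y D)"
    using indep_augment assms(1,4) by (meson not_le)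
  then show False
    using assms(3,5) by blast
qed

lemma basis_card_ge: "basis B \<Longrightarrow> indep Z \<Longrightarrow> card Z \<le> card B"
  unfolding mbasis_def by (rule indep_card_le_maximal[where T = E]) (auto simp: indep_subset_E)

lemma basis_if_card: "basis B \<Longrightarrow> indep Z \<Longrightarrow> card Z = card B \<Longrightarrow> basis Z"
proof -
  assume B: "basis B" and Z: "indep Z" "card Z = card B"
  have "\<not> indep (insert w Z)" if "w \<in> E - Z" for w
  proof
    assume "indep (insert w Z)"
    moreover have "card (insert w Z) = Suc (card B)"
      using that Z indep_finite by simp
    ultimately show False
      using basis_card_ge[OF B] by fastforce
  qed
  then show "basis Z"
    using Z indep_subset_E unfolding mbasis_def by blast
qed

lemma basis_finite: "basis B \<Longrightarrow> finite B"
  unfolding mbasis_def using indep_finite by blast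

lemma basis_exchange_exists:
  assumes B: "basis B" and y: "y \<in> E - B" and D: "D \<subseteq> B" and ind: "indep (insert y D)"
  shows "\<exists>x\<in>B - D. exchange B x y"
proof -
  have "indep B" and fin: "finite B" using B basis_finite unfolding mbasis_def by auto
  obtain Z where Z: "insert y D \<subseteq> Z" "Z \<subseteq> insert y D \<union> B" "indep Z" "card Z = card B"
    using indep_extend[OF ind \<open>indep B\<close> basis_card_ge[OF B ind]] by blast
  have "card (insert y B) = Suc (card B)" using y fin by simp
  then have "Z \<noteq> insert y B" using Z(4) by auto
  moreover have "Z \<subseteq> insert y B" using Z(2) D by blast
  ultimately obtain x where x: "x \<in> B" "x \<notin> Z" using Z(1) by blast
  have "x \<in> B - D" using x Z(1) by blast
  have sub: "Z \<subseteq> insert y (B - {x})" using Z(2) D x by blast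
  have "card (insert y (B - {x})) = card B"
    using x y fin card.remove[OF fin x(1)] by simp
  then have "Z = insert y (B - {x})"
    using card_subset_eq[OF _ sub] fin Z(4) by simp
  then have "basis (insert y (B - {x}))"
    using basis_if_card[OF B Z(3,4)] by simp
  with \<open>x \<in> B - D\<close> y show ?thesis
    unfolding basis_exchange_def by blast
qed

lemma indep_card_le_basis_Int:
  assumes B: "basis B" and closed: "\<And>x y. exchange B x y \<Longrightarrow> y \<in> T \<Longrightarrow> x \<in> T"
    and Z: "indep Z" "Z \<subseteq> T"
  shows "card Z \<le> card (B \<inter> T)"
proof (rule indep_card_le_maximal[OF _ _ _ Z])
  show "indep (B \<inter> T)" using B indep_subset unfolding mbasis_def by blast
  show "\<forall>y\<in>T - B \<inter> T. \<not> indep (insert y (B \<inter> T))"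
  proof (intro ballI notI)
    fix y assume y: "y \<in> T - B \<inter> T" and ind: "indep (insert y (B \<inter> T))"
    then have "y \<in> E - B" using indep_subset_E by blast
    then obtain x where "x \<in> B - B \<inter> T" "exchange B x y"
      using basis_exchange_exists[OF B _ _ ind] by blast
    then show False using closed y by blast
  qed
qed blast

lemma mrank_le: "(\<And>Z. Z \<subseteq> X \<Longrightarrow> indep Z \<Longrightarrow> card Z \<le> k) \<Longrightarrow> mrank indep X \<le> k"
proof -
  assume bound: "\<And>Z. Z \<subseteq> X \<Longrightarrow> indep Z \<Longrightarrow> card Z \<le> k"
  let ?S = "{card Y | Y. Y \<subseteq> X \<and> indep Y}"
  have "?S \<subseteq> {..k}" using bound by auto
  moreover have "?S \<noteq> {}" using indep_empty by blast
  ultimately show ?thesis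
    unfolding mrank_def by (meson Max_le_iff atMost_iff finite_atMost finite_subset subsetD)
qed

lemma card_le_mrank: "Y \<subseteq> X \<Longrightarrow> indep Y \<Longrightarrow> card Y \<le> mrank indep X"
proof -
  assume "Y \<subseteq> X" "indep Y"
  let ?S = "{card Y | Y. Y \<subseteq> X \<and> indep Y}"
  have "?S \<subseteq> {..card E}"
    using card_mono[OF finite_E indep_subset_E] by auto
  then have "finite ?S" by (rule finite_subset) simp
  moreover have "card Y \<in> ?S" using \<open>Y \<subseteq> X\<close> \<open>indep Y\<close> by blast
  ultimately show ?thesis unfolding mrank_def by (rule Max_ge)
qed

lemma basis_Un_basis_Diff:
  assumes B: "basis B" and X: "indep X" "X \<subseteq> K" "card X = card (B \<inter> K)"
    and bound: "\<And>Z. indep Z \<Longrightarrow> Z \<subseteq> K \<Longrightarrow> card Z \<le> card (B \<inter> K)"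
  shows "basis (X \<union> (B - K))"
proof -
  have "indep B" and fin: "finite B" using B basis_finite unfolding mbasis_def by auto
  have split: "card B = card (B \<inter> K) + card (B - K)"
    using card_Int_Diff[OF fin] .
  obtain Y where Y: "X \<subseteq> Y" "Y \<subseteq> X \<union> B" "indep Y" "card Y = card B"
    using indep_extend[OF X(1) \<open>indep B\<close>] X(3) split by fastforce
  have finY: "finite Y" using indep_finite[OF Y(3)] .
  have "card (Y \<inter> K) \<le> card X"
    using bound[of "Y \<inter> K"] indep_subset[OF Y(3)] X(3) by auto
  moreover have "X \<subseteq> Y \<inter> K" using X(2) Y(1) by blast
  ultimately have inside: "Y \<inter> K = X"
    using card_seteq[of "Y \<inter> K" X] finY by simp
  have "card (Y - K) = card (B - K)"
    using card_Int_Diff[OF finY, of K] inside X(3) Y(4) split by simp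
  moreover have "Y - K \<subseteq> B - K" using Y(2) X(2) by blast
  ultimately have "Y - K = B - K"
    using fin by (simp add: card_subset_eq)
  with inside have "Y = X \<union> (B - K)" by blast
  then show ?thesis using basis_if_card[OF B Y(3,4)] by simp
qed

text \<open>An exchange-closed set \<open>K\<close> is a separator, because independent subsets of \<open>K\<close> and of
  \<open>E - K\<close> are bounded by \<open>|B \<inter> K|\<close> and \<open>|B - K|\<close>.\<close>

lemma indep_Un_if_exchange_closed:
  assumes B: "basis B" and closed: "\<And>x y. exchange B x y \<Longrightarrow> x \<in> K \<longleftrightarrow> y \<in> K"
    and X: "indep X" "X \<subseteq> K" and Y: "indep Y" "Y \<inter> K = {}"
  shows "indep (X \<union> Y)"
proof -
  have "B \<subseteq> E" using B unfolding mbasis_def by blast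
  have "indep (B \<inter> K)" "indep (B - K)"
    using B indep_subset unfolding mbasis_def by auto
  have bound_in: "card Z \<le> card (B \<inter> K)" if "indep Z" "Z \<subseteq> K" for Z
    by (rule indep_card_le_basis_Int[OF B _ that]) (use closed in blast)
  have bound_out: "card Z \<le> card (B - K)" if "indep Z" "Z \<subseteq> E - K" for Z
  proof -
    have "card Z \<le> card (B \<inter> (E - K))"
    proof (rule indep_card_le_basis_Int[OF B _ that])
      show "x \<in> E - K" if "exchange B x y" "y \<in> E - K" for x y
        using that closed[OF that(1)] \<open>B \<subseteq> E\<close> unfolding basis_exchange_def by blast
    qed
    also have "B \<inter> (E - K) = B - K" using \<open>B \<subseteq> E\<close> by blast
    finally show ?thesis .
  qed
  have "Y \<subseteq> E - K" using Y indep_subset_E by blast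
  obtain X' where X': "X \<subseteq> X'" "X' \<subseteq> X \<union> B \<inter> K" "indep X'" "card X' = card (B \<inter> K)"
    using indep_extend[OF X(1) \<open>indep (B \<inter> K)\<close>] bound_in[OF X] by blast
  obtain Y' where Y': "Y \<subseteq> Y'" "Y' \<subseteq> Y \<union> (B - K)" "indep Y'" "card Y' = card (B - K)"
    using indep_extend[OF Y(1) \<open>indep (B - K)\<close>] bound_out[OF Y(1) \<open>Y \<subseteq> E - K\<close>] by blast
  define B' where "B' = X' \<union> (B - K)"
  have "basis B'"
    unfolding B'_def
    by (rule basis_Un_basis_Diff[OF B X'(3) _ X'(4) bound_in]) (use X'(2) X(2) in blast)
  have "X' \<subseteq> K" using X'(2) X(2) by blast
  then have B'_out: "B' \<inter> (E - K) = B - K" and B'_in: "B' - (E - K) = X'"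
    using \<open>B \<subseteq> E\<close> indep_subset_E[OF X'(3)] unfolding B'_def by blast+
  have "basis (Y' \<union> (B' - (E - K)))"
  proof (rule basis_Un_basis_Diff[OF \<open>basis B'\<close> Y'(3)])
    show "Y' \<subseteq> E - K" using Y'(2) \<open>Y \<subseteq> E - K\<close> \<open>B \<subseteq> E\<close> by blast
    show "card Y' = card (B' \<inter> (E - K))" using Y'(4) B'_out by simp
    show "card Z \<le> card (B' \<inter> (E - K))" if "indep Z" "Z \<subseteq> E - K" for Z
      using bound_out[OF that] B'_out by simp
  qed
  then have "indep (Y' \<union> X')" unfolding B'_in mbasis_def by blast
  then show ?thesis by (rule indep_subset) (use X'(1) Y'(1) in blast)
qed

lemma dependent_contains_circuit: "X \<subseteq> E \<Longrightarrow> \<not> indep X \<Longrightarrow> \<exists>C\<subseteq>X. circuit C"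
proof (induction "card X" arbitrary: X rule: less_induct)
  case less
  show ?case
  proof (cases "\<forall>x\<in>X. indep (X - {x})")
    case True
    with less.prems show ?thesis unfolding mcircuit_def by blast
  next
    case False
    then obtain x where x: "x \<in> X" "\<not> indep (X - {x})" by blast
    have "card (X - {x}) < card X"
      using x(1) finite_subset[OF less.prems(1) finite_E] by (rule card_Diff1_less[rotated])
    with less.hyps[of "X - {x}"] less.prems x(2) show ?thesis by blast
  qed
qed

lemma basis_exchange_circuit:
  assumes B: "basis B" and xy: "exchange B x y"
  shows "\<exists>C. circuit C \<and> x \<in> C \<and> y \<in> C"
proof -
  have "insert y B \<subseteq> E" "\<not> indep (insert y B)"
    using B xy unfolding mbasis_def basis_exchange_def by auto
  then obtain C where C: "C \<subseteq> insert y B" "circuit C"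
    using dependent_contains_circuit by blast
  have dep: "\<not> indep C" using C(2) unfolding mcircuit_def by blast
  have "y \<in> C"
  proof (rule ccontr)
    assume "y \<notin> C"
    then have "C \<subseteq> B" using C(1) by blast
    then show False using dep B indep_subset[of B C] unfolding mbasis_def by blast
  qed
  moreover have "x \<in> C"
  proof (rule ccontr)
    assume "x \<notin> C"
    then have "C \<subseteq> insert y (B - {x})" using C(1) by blast
    then show False
      using dep xy indep_subset[of "insert y (B - {x})" C]
      unfolding basis_exchange_def mbasis_def by blast
  qed
  ultimately show ?thesis using C(2) by blast
qed

lemma exchange_invariant_const_on_circuit:
  assumes B: "basis B" and inv: "\<And>x y. exchange B x y \<Longrightarrow> f x = f y"
    and C: "circuit C" "a \<in> C" "c \<in> C"
  shows "f a = f c"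
proof (rule ccontr)
  assume ne: "f a \<noteq> f c"
  define K where "K = {v. f v = f a}"
  have "indep (C - {c})" "indep (C - {a})"
    using C unfolding mcircuit_def by auto
  moreover have "C \<inter> K \<subseteq> C - {c}" "C - K \<subseteq> C - {a}"
    using ne unfolding K_def by auto
  ultimately have "indep (C \<inter> K)" "indep (C - K)"
    by (blast intro: indep_subset)+
  then have "indep (C \<inter> K \<union> (C - K))"
  proof (intro indep_Un_if_exchange_closed[OF B])
    show "x \<in> K \<longleftrightarrow> y \<in> K" if "exchange B x y" for x y
      using inv[OF that] unfolding K_def by simp
  qed auto
  moreover have "C \<inter> K \<union> (C - K) = C" by blast
  ultimately show False using C(1) unfolding mcircuit_def by simp
qed

lemma const_on_components_iff_exchange_invariant:
  assumes B: "basis B"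
  shows "(\<forall>K\<in>mcomponents E indep. \<forall>x\<in>K. \<forall>y\<in>K. f x = f y) \<longleftrightarrow>
    (\<forall>x y. exchange B x y \<longrightarrow> f x = f y)"
proof
  assume const: "\<forall>K\<in>mcomponents E indep. \<forall>x\<in>K. \<forall>y\<in>K. f x = f y"
  show "\<forall>x y. exchange B x y \<longrightarrow> f x = f y"
  proof (intro allI impI)
    fix x y assume "exchange B x y"
    then obtain C where C: "circuit C" "x \<in> C" "y \<in> C"
      using basis_exchange_circuit[OF B] by blast
    then have "x \<in> E" "y \<in> E" unfolding mcircuit_def by blast+
    define K where "K = {z \<in> E. comp_rel E indep x z}"
    have "K \<in> mcomponents E indep" using \<open>x \<in> E\<close> unfolding K_def mcomponents_def by blast
    moreover have "x \<in> K" "y \<in> K"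
      using C \<open>x \<in> E\<close> \<open>y \<in> E\<close> unfolding K_def comp_rel_def by blast+
    ultimately show "f x = f y" using const by blast
  qed
next
  assume "\<forall>x y. exchange B x y \<longrightarrow> f x = f y"
  then have rel: "f x = f y" if "comp_rel E indep x y" for x y
    using that exchange_invariant_const_on_circuit[OF B, of f] unfolding comp_rel_def by metis
  show "\<forall>K\<in>mcomponents E indep. \<forall>x\<in>K. \<forall>y\<in>K. f x = f y"
    unfolding mcomponents_def by (auto dest!: rel)
qed

end


definition walk :: "('a \<times> 'a) set \<Rightarrow> 'a \<Rightarrow> 'a \<Rightarrow> 'a list \<Rightarrow> bool" where
  "walk A u v xs \<longleftrightarrow> xs \<noteq> [] \<and> hd xs = u \<and> last xs = v \<and> successively (\<lambda>x y. (x, y) \<in> A) xs"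

fun walk_label :: "('a \<times> 'a \<Rightarrow> 'g::ab_group_add) \<Rightarrow> 'a list \<Rightarrow> 'g" where
  "walk_label l (x # y # ys) = l (x, y) + walk_label l (y # ys)"
| "walk_label l _ = 0"

lemma walk_label_append:
  "walk_label l (xs @ y # ys) = walk_label l (xs @ [y]) + walk_label l (y # ys)"
proof (induction xs)
  case (Cons x xs)
  then show ?case by (cases xs) (simp_all add: add.assoc)
qed simp

lemma walk_label_snoc: "xs \<noteq> [] \<Longrightarrow> walk_label l (xs @ [y]) = walk_label l xs + l (last xs, y)"
  by (induction l xs rule: walk_label.induct) (simp_all add: add.assoc)

lemma walk_label_conv_sum: "walk_label l xs = (\<Sum>i < length xs - 1. l (xs ! i, xs ! Suc i))"
proof (induction l xs rule: walk_label.induct)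
  case (1 l x y ys)
  then show ?case
    by (simp add: sum.lessThan_Suc_shift del: sum.lessThan_Suc)
qed auto

lemma walk_snoc: "walk A u v xs \<Longrightarrow> (v, w) \<in> A \<Longrightarrow> walk A u w (xs @ [w])"
  unfolding walk_def by (auto simp: successively_append_iff)

lemma walk_append: "walk A u v xs \<Longrightarrow> walk A v w ys \<Longrightarrow> walk A u w (xs @ tl ys)"
  unfolding walk_def by (cases ys) (auto simp: successively_append_iff successively_Cons)

lemma walk_label_append_walks:
  assumes "walk A u v xs" "walk A v w ys"
  shows "walk_label l (xs @ tl ys) = walk_label l xs + walk_label l ys"
proof -
  obtain xs' ys' where "xs = xs' @ [v]" "ys = v # ys'"
    using assms unfolding walk_def by (metis append_butlast_last_id list.collapse)
  then show ?thesis using walk_label_append[of l xs' v ys'] by simp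
qed

lemma walk_if_rtrancl: "(u, v) \<in> A\<^sup>* \<Longrightarrow> \<exists>xs. walk A u v xs"
proof (induction rule: rtrancl_induct)
  case base
  show ?case by (rule exI[of _ "[u]"]) (simp add: walk_def)
next
  case (step v w)
  then obtain xs where "walk A u v xs" by blast
  then show ?case using walk_snoc[OF _ step.hyps(2)] by blast
qed

lemma walk_label_potential:
  assumes pot: "\<And>a b. (a, b) \<in> A \<Longrightarrow> l (a, b) = p b - p a"
  shows "walk A u v xs \<Longrightarrow> walk_label l xs = p v - p u"
proof (induction xs arbitrary: u)
  case (Cons x xs)
  show ?case
  proof (cases xs)
    case Nil
    with Cons.prems show ?thesis by (auto simp: walk_def)
  next
    case (Cons y ys)
    with Cons.prems have "walk A y v xs" "(x, y) \<in> A" "u = x"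
      unfolding walk_def by auto
    with Cons.IH pot[of x y] \<open>xs = y # ys\<close> show ?thesis by simp
  qed
qed (simp add: walk_def)

lemma nth_append_hd_Suc:
  "i < length vs \<Longrightarrow> (vs @ [hd vs]) ! Suc i = vs ! (Suc i mod length vs)"
proof (cases "Suc i < length vs")
  case False
  moreover assume "i < length vs"
  ultimately have "Suc i = length vs" by simp
  then show ?thesis by (cases vs) (auto simp: nth_append)
qed (simp add: nth_append)

lemma successively_append_hd_iff:
  "successively P (vs @ [hd vs]) \<longleftrightarrow> (\<forall>i < length vs. P (vs ! i) (vs ! (Suc i mod length vs)))"
  unfolding successively_conv_nth
  by (auto simp: nth_append_left nth_append_hd_Suc simp del: mod_Suc)

lemma dir_cycle_iff_closed_walk:
  "dir_cycle A vs \<longleftrightarrow> vs \<noteq> [] \<and> distinct vs \<and> walk A (hd vs) (hd vs) (vs @ [hd vs])"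
  unfolding dir_cycle_def walk_def successively_append_hd_iff by auto

lemma cycle_label_conv_walk_label:
  "vs \<noteq> [] \<Longrightarrow> cycle_label B \<psi> vs = walk_label (arc_label B \<psi>) (vs @ [hd vs])"
  unfolding cycle_label_def walk_label_conv_sum
  by (intro sum.cong) (auto simp: nth_append_left nth_append_hd_Suc simp del: mod_Suc)

lemma closed_walk_label_zero:
  assumes cycles: "\<And>vs. dir_cycle A vs \<Longrightarrow> walk_label l (vs @ [hd vs]) = 0"
  shows "walk A v v xs \<Longrightarrow> walk_label l xs = 0"
proof (induction "length xs" arbitrary: v xs rule: less_induct)
  case less
  obtain ys where xs: "xs = ys @ [v]"
    using less.prems unfolding walk_def by (metis append_butlast_last_id)
  show ?case
  proof (cases "ys = []")
    case False
    then have "hd ys = v" using less.prems xs unfolding walk_def by simp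
    show ?thesis
    proof (cases "distinct ys")
      case True
      then have "dir_cycle A ys"
        using False less.prems \<open>hd ys = v\<close> xs by (simp add: dir_cycle_iff_closed_walk)
      then show ?thesis using cycles \<open>hd ys = v\<close> xs by blast
    next
      case False
      \<comment> \<open>a repeated vertex splits the closed walk into two shorter ones\<close>
      then obtain a w b c where "ys = a @ [w] @ b @ [w] @ c"
        using not_distinct_decomp by blast
      then have xs': "xs = a @ w # (b @ w # (c @ [v]))" using xs by simp
      define loop where "loop = w # b @ [w]"
      define rest where "rest = a @ w # c @ [v]"
      have "walk A w w loop" "walk A v v rest"
        using less.prems \<open>hd ys = v\<close> \<open>ys = a @ [w] @ b @ [w] @ c\<close>
        unfolding xs' walk_def loop_def rest_def
        by (auto simp: successively_append_iff successively_Cons hd_append)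
      moreover have "length loop < length xs" "length rest < length xs"
        unfolding xs' loop_def rest_def by simp_all
      ultimately have "walk_label l loop = 0" "walk_label l rest = 0"
        using less.hyps by blast+
      moreover have "walk_label l xs = walk_label l loop + walk_label l rest"
        unfolding xs' loop_def rest_def
        using walk_label_append[of l a w "b @ w # c @ [v]"] walk_label_append[of l "w # b" w "c @ [v]"]
          walk_label_append[of l a w "c @ [v]"]
        by (simp add: algebra_simps)
      ultimately show ?thesis by simp
    qed
  qed (simp add: xs)
qed

lemma potential_if_closed_walks_zero:
  assumes closed: "\<And>v xs. walk A v v xs \<Longrightarrow> walk_label l xs = 0"
    and reach: "\<And>u v. u \<in> V \<Longrightarrow> v \<in> V \<Longrightarrow> (u, v) \<in> A\<^sup>*" and A: "A \<subseteq> V \<times> V"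
  shows "\<exists>p. \<forall>(u, v) \<in> A. l (u, v) = p v - p u"
proof (cases "V = {}")
  case False
  then obtain v0 where "v0 \<in> V" by blast
  define path where "path v = (SOME xs. walk A v0 v xs)" for v
  have path: "walk A v0 v (path v)" if "v \<in> V" for v
    unfolding path_def by (rule someI_ex) (rule walk_if_rtrancl[OF reach[OF \<open>v0 \<in> V\<close> that]])
  have "l (u, v) = walk_label l (path v) - walk_label l (path u)" if "(u, v) \<in> A" for u v
  proof -
    have "u \<in> V" "v \<in> V" using that A by auto
    obtain ret where ret: "walk A v v0 ret"
      using walk_if_rtrancl[OF reach[OF \<open>v \<in> V\<close> \<open>v0 \<in> V\<close>]] by blast
    have via_u: "walk A v0 v (path u @ [v])"
      using walk_snoc[OF path[OF \<open>u \<in> V\<close>] that] .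
    have "walk_label l (path u @ [v]) + walk_label l ret = 0"
      using closed[OF walk_append[OF via_u ret]] walk_label_append_walks[OF via_u ret, of l] by simp
    moreover have "walk_label l (path v) + walk_label l ret = 0"
      using closed[OF walk_append[OF path[OF \<open>v \<in> V\<close>] ret]]
        walk_label_append_walks[OF path[OF \<open>v \<in> V\<close>] ret, of l] by simp
    ultimately have "walk_label l (path u @ [v]) = walk_label l (path v)"
      by (metis add_right_cancel)
    moreover have "walk_label l (path u @ [v]) = walk_label l (path u) + l (u, v)"
      using path[OF \<open>u \<in> V\<close>] walk_label_snoc[of "path u" l v] unfolding walk_def by simp
    ultimately show ?thesis by (simp add: algebra_simps)
  qed
  then show ?thesis by (intro exI[of _ "\<lambda>v. walk_label l (path v)"]) auto
qed (use A in auto)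

lemma cycle_labels_zero_iff_potential:
  assumes reach: "\<And>u v. u \<in> V \<Longrightarrow> v \<in> V \<Longrightarrow> (u, v) \<in> A\<^sup>*" and A: "A \<subseteq> V \<times> V"
  shows "(\<forall>vs. dir_cycle A vs \<longrightarrow> cycle_label B \<psi> vs = 0) \<longleftrightarrow>
    (\<exists>p. \<forall>(u, v) \<in> A. arc_label B \<psi> (u, v) = p v - p u)"
proof
  assume "\<forall>vs. dir_cycle A vs \<longrightarrow> cycle_label B \<psi> vs = 0"
  then have "walk_label (arc_label B \<psi>) (vs @ [hd vs]) = 0" if "dir_cycle A vs" for vs
    using that cycle_label_conv_walk_label[of vs B \<psi>] unfolding dir_cycle_def by simp
  then have "walk_label (arc_label B \<psi>) xs = 0" if "walk A v v xs" for v xs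
    using closed_walk_label_zero[OF _ that] by blast
  then show "\<exists>p. \<forall>(u, v) \<in> A. arc_label B \<psi> (u, v) = p v - p u"
    by (rule potential_if_closed_walks_zero[OF _ reach A])
next
  assume "\<exists>p. \<forall>(u, v) \<in> A. arc_label B \<psi> (u, v) = p v - p u"
  then obtain p where p: "\<And>u v. (u, v) \<in> A \<Longrightarrow> arc_label B \<psi> (u, v) = p v - p u" by blast
  show "\<forall>vs. dir_cycle A vs \<longrightarrow> cycle_label B \<psi> vs = 0"
  proof (intro allI impI)
    fix vs assume "dir_cycle A vs"
    then have "vs \<noteq> []" and "walk A (hd vs) (hd vs) (vs @ [hd vs])"
      by (simp_all add: dir_cycle_iff_closed_walk)
    then show "cycle_label B \<psi> vs = 0"
      using walk_label_potential[of A "arc_label B \<psi>" p, OF p] by (simp add: cycle_label_conv_walk_label)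
  qed
qed

lemma mem_exch_arcs:
  "(u, v) \<in> exch_arcs E I1 I2 B \<longleftrightarrow> basis_exchange E I1 B u v \<or> basis_exchange E I2 B v u"
  unfolding exch_arcs_def basis_exchange_def by blast

lemma exch_arcs_subset: "B \<subseteq> E \<Longrightarrow> exch_arcs E I1 I2 B \<subseteq> E \<times> E"
  unfolding exch_arcs_def by blast

lemma exch_arcs_strongly_connected:
  assumes M1: "matroid E I1" and M2: "matroid E I2"
    and conn: "\<And>X. X \<noteq> {} \<Longrightarrow> X \<subset> E \<Longrightarrow> mrank I1 X + mrank I2 (E - X) > mrank I1 E"
    and B1: "mbasis E I1 B" and B2: "mbasis E I2 B" and u: "u \<in> E" and v: "v \<in> E"
  shows "(u, v) \<in> (exch_arcs E I1 I2 B)\<^sup>*"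
proof (rule ccontr)
  interpret M1: matroid_on E I1 by (rule matroid_on.intro[OF M1])
  interpret M2: matroid_on E I2 by (rule matroid_on.intro[OF M2])
  let ?A = "exch_arcs E I1 I2 B"
  define S where "S = {w. (u, w) \<in> ?A\<^sup>*}"
  assume "(u, v) \<notin> ?A\<^sup>*"
  then have "v \<notin> S" unfolding S_def by blast
  have "B \<subseteq> E" using B1 unfolding mbasis_def by blast
  have S_closed: "b \<in> S" if "a \<in> S" "(a, b) \<in> ?A" for a b
    using that unfolding S_def by (simp add: rtrancl_into_rtrancl)
  have "S \<subseteq> E"
  proof
    fix w assume "w \<in> S"
    then have "(u, w) \<in> ?A\<^sup>*" unfolding S_def by blast
    then show "w \<in> E"
      using u exch_arcs_subset[OF \<open>B \<subseteq> E\<close>] by (cases rule: rtranclE) auto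
  qed
  have "u \<in> S" unfolding S_def by blast
  have rank_out: "mrank I1 (E - S) \<le> card (B \<inter> (E - S))"
  proof (rule M1.mrank_le, rule M1.indep_card_le_basis_Int[OF B1])
    show "x \<in> E - S" if "basis_exchange E I1 B x y" "y \<in> E - S" for x y
      using that S_closed[of x y] \<open>B \<subseteq> E\<close> unfolding mem_exch_arcs basis_exchange_def by blast
  qed
  have rank_in: "mrank I2 S \<le> card (B \<inter> S)"
  proof (rule M2.mrank_le, rule M2.indep_card_le_basis_Int[OF B2])
    show "x \<in> S" if "basis_exchange E I2 B x y" "y \<in> S" for x y
      using that S_closed[of y x] unfolding mem_exch_arcs by blast
  qed
  have "mrank I1 E < mrank I1 (E - S) + mrank I2 (E - (E - S))"
    by (rule conn) (use \<open>v \<notin> S\<close> v \<open>u \<in> S\<close> u in auto)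
  also have "\<dots> \<le> card (B - S) + card (B \<inter> S)"
  proof -
    have "B \<inter> (E - S) = B - S" "E - (E - S) = S" using \<open>B \<subseteq> E\<close> \<open>S \<subseteq> E\<close> by blast+
    then show ?thesis using rank_out rank_in by simp
  qed
  also have "\<dots> = card B"
    using card_Int_Diff[OF M1.basis_finite[OF B1], of S] by simp
  also have "card B \<le> mrank I1 E"
    using M1.card_le_mrank[of B E] B1 unfolding mbasis_def by blast
  finally show False by simp
qed

lemma exch_potential_iff_decomposition:
  fixes \<psi> :: "'a \<Rightarrow> 'g::ab_group_add"
  assumes "B \<subseteq> E"
  shows "(\<exists>p. \<forall>(u, v) \<in> exch_arcs E I1 I2 B. arc_label B \<psi> (u, v) = p v - p u) \<longleftrightarrow>
    (\<exists>\<psi>1 \<psi>2. (\<forall>x\<in>E. \<psi> x = \<psi>1 x + \<psi>2 x) \<and>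
      (\<forall>x y. basis_exchange E I1 B x y \<longrightarrow> \<psi>1 x = \<psi>1 y) \<and>
      (\<forall>x y. basis_exchange E I2 B x y \<longrightarrow> \<psi>2 x = \<psi>2 y))"
proof
  assume "\<exists>p. \<forall>(u, v) \<in> exch_arcs E I1 I2 B. arc_label B \<psi> (u, v) = p v - p u"
  then obtain p where p: "\<And>u v. (u, v) \<in> exch_arcs E I1 I2 B \<Longrightarrow> arc_label B \<psi> (u, v) = p v - p u"
    by blast
  define \<psi>2 where "\<psi>2 v = p v + (if v \<in> B then \<psi> v else 0)" for v
  define \<psi>1 where "\<psi>1 v = \<psi> v - \<psi>2 v" for v
  have "\<psi>1 x = \<psi>1 y" if "basis_exchange E I1 B x y" for x y
  proof -
    have "\<psi> y = p y - p x"
      using p[of x y] that unfolding mem_exch_arcs arc_label_def basis_exchange_def by simp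
    then show ?thesis using that unfolding \<psi>1_def \<psi>2_def basis_exchange_def by simp
  qed
  moreover have "\<psi>2 x = \<psi>2 y" if "basis_exchange E I2 B x y" for x y
  proof -
    have "- \<psi> x = p x - p y"
      using p[of y x] that unfolding mem_exch_arcs arc_label_def basis_exchange_def by simp
    then show ?thesis using that unfolding \<psi>2_def basis_exchange_def by (simp add: algebra_simps)
  qed
  ultimately show "\<exists>\<psi>1 \<psi>2. (\<forall>x\<in>E. \<psi> x = \<psi>1 x + \<psi>2 x) \<and>
      (\<forall>x y. basis_exchange E I1 B x y \<longrightarrow> \<psi>1 x = \<psi>1 y) \<and>
      (\<forall>x y. basis_exchange E I2 B x y \<longrightarrow> \<psi>2 x = \<psi>2 y)"
    by (intro exI[of _ \<psi>1] exI[of _ \<psi>2]) (simp add: \<psi>1_def)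
next
  assume "\<exists>\<psi>1 \<psi>2. (\<forall>x\<in>E. \<psi> x = \<psi>1 x + \<psi>2 x) \<and>
      (\<forall>x y. basis_exchange E I1 B x y \<longrightarrow> \<psi>1 x = \<psi>1 y) \<and>
      (\<forall>x y. basis_exchange E I2 B x y \<longrightarrow> \<psi>2 x = \<psi>2 y)"
  then obtain \<psi>1 \<psi>2 where sum: "\<And>x. x \<in> E \<Longrightarrow> \<psi> x = \<psi>1 x + \<psi>2 x"
    and inv1: "\<And>x y. basis_exchange E I1 B x y \<Longrightarrow> \<psi>1 x = \<psi>1 y"
    and inv2: "\<And>x y. basis_exchange E I2 B x y \<Longrightarrow> \<psi>2 x = \<psi>2 y"
    by blast
  define p where "p v = (if v \<in> B then - \<psi>1 v else \<psi>2 v)" for v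
  have "arc_label B \<psi> (u, v) = p v - p u" if "(u, v) \<in> exch_arcs E I1 I2 B" for u v
    using that sum[of u] sum[of v] inv1[of u v] inv2[of v u] \<open>B \<subseteq> E\<close>
    unfolding mem_exch_arcs basis_exchange_def arc_label_def p_def
    by (auto simp: algebra_simps)
  then show "\<exists>p. \<forall>(u, v) \<in> exch_arcs E I1 I2 B. arc_label B \<psi> (u, v) = p v - p u"
    by blast
qed

theorem theorem3p13:
  fixes E :: "'a set" and I1 I2 :: "'a set \<Rightarrow> bool" and r :: nat
    and B :: "'a set" and \<psi> :: "'a \<Rightarrow> 'g::ab_group_add"
  assumes "matroid E I1" and "matroid E I2"
    and "mrank I1 E = r" and "mrank I2 E = r"
    and "\<And>X. X \<noteq> {} \<Longrightarrow> X \<subset> E \<Longrightarrow> mrank I1 X + mrank I2 (E - X) > r"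
    and "mbasis E I1 B" and "mbasis E I2 B"
  shows "(\<forall>vs. dir_cycle (exch_arcs E I1 I2 B) vs \<longrightarrow> cycle_label B \<psi> vs = 0) \<longleftrightarrow>
    (\<exists>\<psi>1 \<psi>2 :: 'a \<Rightarrow> 'g. (\<forall>x\<in>E. \<psi> x = \<psi>1 x + \<psi>2 x) \<and>
       (\<forall>K\<in>mcomponents E I1. \<forall>x\<in>K. \<forall>y\<in>K. \<psi>1 x = \<psi>1 y) \<and>
       (\<forall>K\<in>mcomponents E I2. \<forall>x\<in>K. \<forall>y\<in>K. \<psi>2 x = \<psi>2 y))"
proof -
  interpret M1: matroid_on E I1 by (rule matroid_on.intro) fact
  interpret M2: matroid_on E I2 by (rule matroid_on.intro) fact
  have "B \<subseteq> E" using \<open>mbasis E I1 B\<close> unfolding mbasis_def by blast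
  have "(\<forall>vs. dir_cycle (exch_arcs E I1 I2 B) vs \<longrightarrow> cycle_label B \<psi> vs = 0) \<longleftrightarrow>
    (\<exists>p. \<forall>(u, v) \<in> exch_arcs E I1 I2 B. arc_label B \<psi> (u, v) = p v - p u)"
  proof (rule cycle_labels_zero_iff_potential[OF _ exch_arcs_subset[OF \<open>B \<subseteq> E\<close>]])
    show "(u, v) \<in> (exch_arcs E I1 I2 B)\<^sup>*" if "u \<in> E" "v \<in> E" for u v
      using exch_arcs_strongly_connected[OF assms(1,2) _ assms(6,7) that] assms(3,5) by simp
  qed
  also have "\<dots> \<longleftrightarrow> (\<exists>\<psi>1 \<psi>2. (\<forall>x\<in>E. \<psi> x = \<psi>1 x + \<psi>2 x) \<and>
      (\<forall>x y. basis_exchange E I1 B x y \<longrightarrow> \<psi>1 x = \<psi>1 y) \<and>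
      (\<forall>x y. basis_exchange E I2 B x y \<longrightarrow> \<psi>2 x = \<psi>2 y))"
    by (rule exch_potential_iff_decomposition[OF \<open>B \<subseteq> E\<close>])
  finally show ?thesis
    by (simp only: M1.const_on_components_iff_exchange_invariant[OF assms(6)]
        M2.const_on_components_iff_exchange_invariant[OF assms(7)])
qed

end
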